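(* Let $(\mathcal Q,d)$ be a Hadamard space, $Y$ a $\mathcal Q$-valued random variable, $o\in\mathcal Q$, and $\tau\in\mathcal S_0^+$ with $\mathbb E[\tau'(d(Y,o))]<\infty$. Let $m\in\arg\min_{q\in\mathcal Q}\mathbb E[\tau(d(Y,q))-\tau(d(Y,o))]$, let $x_0:=\inf\{x\in(0,\infty):\tau'^{\oplus}(x)=0\}$ (with $\inf\emptyset=\infty$), and assume $\mathbb P(d(Y,m)<x_0)>0$. Let either $\beta:=0$, or $\beta\in[0,1)$ be such that $$\liminf_{x\searrow0}\frac{\tau'^{\oplus}(2x)\,\mathbb P(d(Y,m)\le x)}{x^{-\beta}}>0.$$ Then there are constants $c_1,c_2,c_3,c_4,\delta\in(0,\infty)$ such that (i) for all $q$ with $d(q,m)<\delta$: $c_1 d(q,m)\ge\mathbb E[\tau(d(Y,q))-\tau(d(Y,m))]\ge c_2\, d(q,m)^{2-\beta}$; (ii) for all $q$ with $d(q,m)\ge\delta$: $c_3\tau(d(q,m))\ge\mathbb E[\tau(d(Y,q))-\tau(d(Y,m))]\ge c_4\tau(d(q,m))$.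
   Context: A Hadamard space is a complete metric space $(\mathcal Q,d)$ such that for all $y_0,y_1$ there is $m$ with $\frac12 d(y_0,q)^2+\frac12 d(y_1,q)^2-\frac14 d(y_0,y_1)^2\ge d(q,m)^2$ for all $q$. $\mathcal S_0^+$ is the set of nondecreasing convex $\tau:[0,\infty)\to\mathbb R$, differentiable on $(0,\infty)$ with concave derivative $\tau'$ (with $\tau'(0):=\lim_{x\searrow0}\tau'(x)$), $\tau(0)=0$ and $\tau'(x)>0$ for $x>0$; $\tau'^{\oplus}$ is the right derivative of $\tau'$. *)

theory Defs
  imports "HOL-Probability.Probability"
begin

text \<open>Hadamard space: a complete metric space (type class complete_space) satisfying
  the midpoint inequality from the paper.\<close>
definition hadamard :: "'a::metric_space itself \<Rightarrow> bool" where
  "hadamard _ \<longleftrightarrow>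
     (\<forall>y0 y1::'a. \<exists>m::'a. \<forall>q::'a.
        dist y0 q ^ 2 / 2 + dist y1 q ^ 2 / 2 - dist y0 y1 ^ 2 / 4 \<ge> dist q m ^ 2)"

definition tau' :: "(real \<Rightarrow> real) \<Rightarrow> real \<Rightarrow> real" where
  "tau' \<tau> x = (if x > 0 then deriv \<tau> x else Lim (at_right 0) (deriv \<tau>))"

definition rderiv :: "(real \<Rightarrow> real) \<Rightarrow> real \<Rightarrow> real" where
  "rderiv f x = Lim (at_right 0) (\<lambda>h. (f (x + h) - f x) / h)"

definition S0plus :: "(real \<Rightarrow> real) set" where
  "S0plus = {\<tau>. mono_on {0..} \<tau> \<and> convex_on {0..} \<tau>
      \<and> (\<forall>x>0. \<tau> differentiable (at x))
      \<and> concave_on {0..} (tau' \<tau>)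
      \<and> \<tau> 0 = 0 \<and> (\<forall>x>0. tau' \<tau> x > 0)}"

end

theory Submission
  imports Defs
begin

text \<open>Write \<open>\<Phi>(q) = E[\<tau>(d(Y,q)) - \<tau>(d(Y,m))] \<ge> 0\<close>. The upper bounds follow from the
  pointwise estimate \<open>|\<tau>(b) - \<tau>(c)| \<le> |b - c| (\<tau>'(c) + \<tau>'(|b - c|))\<close>, a consequence of the
  concavity of \<open>\<tau>'\<close>, together with \<open>x \<tau>'(x) \<le> 2 \<tau>(x)\<close>.

  For the lower bounds let \<open>\<mu>\<close> be the midpoint of \<open>m\<close> and \<open>q\<close>. On \<open>[0, Z]\<close> the derivative \<open>\<tau>'\<close>
  grows at rate at least \<open>\<rho>(Z) = \<tau>'\<^sup>\<oplus>(Z)\<close>, so \<open>\<tau>\<close> is strongly convex there, and with the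
  Hadamard inequality for \<open>\<mu>\<close> this gives
  \<open>\<Phi>(m) + \<Phi>(q) - 2 \<Phi>(\<mu>) \<ge> \<rho>(Z) d(q,m)\<^sup>2/4 P(d(Y,m) \<le> R)\<close> whenever \<open>R + d(q,m) \<le> Z\<close>.
  Since \<open>\<Phi>(\<mu>) \<ge> 0\<close>, this is the local bound, with \<open>R < Z < x\<^sub>0\<close> fixed when \<open>\<beta> = 0\<close> and with
  \<open>R = d(q,m)\<close>, \<open>Z = 2 d(q,m)\<close> under the liminf condition.

  Far from \<open>m\<close>, iterate midpoints towards \<open>m\<close>:
  \<open>\<Phi>(q) = 2\<^sup>k \<Phi>(q\<^sub>k) + \<Sum>\<^sub>j\<^sub><\<^sub>k 2\<^sup>j (\<Phi>(m) + \<Phi>(q\<^sub>j) - 2 \<Phi>(q\<^sub>j\<^sub>+\<^sub>1))\<close> with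
  \<open>d(q\<^sub>k, m) \<approx> \<delta>\<close>. The first term makes \<open>\<Phi>\<close> grow linearly in \<open>d(q,m)\<close>. The midpoint defects are at least
  \<open>P(d(Y,m) \<le> R) (\<tau>(d) - 2 \<tau>(d/2))\<close> up to errors proportional to \<open>R\<close>; these telescope to
  \<open>\<tau>(d(q,m))/2\<close> minus an error linear in \<open>d(q,m)\<close>, which the linear growth absorbs.\<close>

lemma tendsto_Lim_at_right_0_mono:
  fixes f :: "real \<Rightarrow> real"
  assumes mono: "\<And>x y. 0 < x \<Longrightarrow> x \<le> y \<Longrightarrow> f x \<le> f y"
    and bdd: "\<And>x. 0 < x \<Longrightarrow> B \<le> f x"
  shows "(f \<longlongrightarrow> Lim (at_right 0) f) (at_right 0)"
proof -
  have "(f \<longlongrightarrow> Inf (f ` {0<..})) (at_right 0)"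
  proof (rule order_tendstoI)
    fix a assume "Inf (f ` {0<..}) < a"
    then obtain x where "x > 0" "f x < a"
      using cInf_lessD[of "f ` {0<..}" a] by auto
    then show "eventually (\<lambda>y. f y < a) (at_right 0)"
      unfolding eventually_at_right_field using mono
      by (intro exI[of _ x]) (metis less_imp_le order.strict_trans1)
  next
    fix a assume a: "a < Inf (f ` {0<..})"
    have "Inf (f ` {0<..}) \<le> f y" if "y > 0" for y
      by (rule cInf_lower) (use that bdd in \<open>auto intro!: bdd_belowI\<close>)
    with a show "eventually (\<lambda>y. a < f y) (at_right 0)"
      unfolding eventually_at_right_field by (metis less_le_trans zero_less_one)
  qed
  then show ?thesis
    by (metis tendsto_Lim trivial_limit_at_right_real)
qed

lemma tendsto_Lim_at_right_0_antimono:
  fixes f :: "real \<Rightarrow> real"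
  assumes "\<And>x y. 0 < x \<Longrightarrow> x \<le> y \<Longrightarrow> f y \<le> f x"
    and "\<And>x. 0 < x \<Longrightarrow> f x \<le> B"
  shows "(f \<longlongrightarrow> Lim (at_right 0) f) (at_right 0)"
proof -
  have "((\<lambda>x. - f x) \<longlongrightarrow> Lim (at_right 0) (\<lambda>x. - f x)) (at_right 0)"
    by (rule tendsto_Lim_at_right_0_mono[where B = "- B"]) (use assms in auto)
  then have "(f \<longlongrightarrow> - Lim (at_right 0) (\<lambda>x. - f x)) (at_right 0)"
    using tendsto_minus by fastforce
  then show ?thesis
    by (metis tendsto_Lim trivial_limit_at_right_real)
qed

lemma le_by_nonneg_derivative:
  fixes f :: "real \<Rightarrow> real"
  assumes "a \<le> b" "continuous_on {a..b} f"
    and "\<And>x. a < x \<Longrightarrow> x < b \<Longrightarrow> (f has_real_derivative f' x) (at x)"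
    and "\<And>x. a < x \<Longrightarrow> x < b \<Longrightarrow> 0 \<le> f' x"
  shows "f a \<le> f b"
  by (rule DERIV_nonneg_imp_increasing_open[OF assms(1) _ assms(2)]) (use assms(3,4) in blast)

lemma sum_lessThan_power2: "(\<Sum>j<k. (2::real) ^ j) = 2 ^ k - 1"
  by (simp add: geometric_sum)

lemma sum_power2_below_le:
  "(\<Sum>j<k. if j + L < k then (2::real) ^ j else 0) \<le> 2 ^ k / 2 ^ L"
proof -
  have "(\<Sum>j<k. if j + L < k then (2::real) ^ j else 0) = (\<Sum>j\<in>{j\<in>{..<k}. j + L < k}. 2 ^ j)"
    using sum.inter_filter[of "{..<k}" "\<lambda>j. (2::real) ^ j" "\<lambda>j. j + L < k"] by simp
  also have "{j\<in>{..<k}. j + L < k} = {..<k - L}" by auto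
  also have "(\<Sum>j<k - L. (2::real) ^ j) = 2 ^ (k - L) - 1" by (rule sum_lessThan_power2)
  also have "\<dots> \<le> 2 ^ k / 2 ^ L"
    by (cases "L \<le> k") (simp_all add: power_diff)
  finally show ?thesis .
qed

lemma dyadic_scale:
  fixes \<delta> D :: real
  assumes "0 < \<delta>" "\<delta> \<le> D"
  obtains k :: nat where "\<delta> / 2 \<le> D / 2 ^ k" "D / 2 ^ k < \<delta>"
proof -
  obtain n :: nat where "D / \<delta> < 2 ^ n" using real_arch_pow[of 2 "D / \<delta>"] by auto
  then have ex: "\<exists>n :: nat. D / 2 ^ n < \<delta>" using assms by (auto simp: field_simps)
  define k where "k = (LEAST n :: nat. D / 2 ^ n < \<delta>)"
  have k: "D / 2 ^ k < \<delta>" unfolding k_def by (rule LeastI_ex[OF ex])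
  have "k \<noteq> 0"
  proof
    assume "k = 0"
    with k assms show False by simp
  qed
  then have "\<not> D / 2 ^ (k - 1) < \<delta>" unfolding k_def by (intro not_less_Least) auto
  moreover have "(2::real) ^ k = 2 * 2 ^ (k - 1)" using \<open>k \<noteq> 0\<close> by (cases k) auto
  ultimately have "\<delta> / 2 \<le> D / 2 ^ k" by (simp add: field_simps)
  with k show ?thesis using that by blast
qed

lemma (in prob_space) prob_sublevel_pos_below:
  fixes X :: "'a \<Rightarrow> real" and x0 :: ereal
  assumes X[measurable]: "X \<in> borel_measurable M"
    and pos: "0 < prob {\<omega> \<in> space M. ereal (X \<omega>) < x0}"
  shows "\<exists>R. ereal R < x0 \<and> 0 < prob {\<omega> \<in> space M. X \<omega> \<le> R}"
proof (rule ccontr)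
  assume "\<not> ?thesis"
  then have null: "{\<omega> \<in> space M. X \<omega> \<le> r} \<in> null_sets M" if "ereal r < x0" for r
    using that measure_nonneg[of M "{\<omega> \<in> space M. X \<omega> \<le> r}"]
    by (auto simp: null_sets_def emeasure_eq_measure order.order_iff_strict)
  have sub: "{\<omega> \<in> space M. ereal (X \<omega>) < x0} \<subseteq> (\<Union>r \<in> {r \<in> \<rat>. ereal r < x0}. {\<omega> \<in> space M. X \<omega> \<le> r})"
  proof
    fix \<omega> assume \<omega>: "\<omega> \<in> {\<omega> \<in> space M. ereal (X \<omega>) < x0}"
    then obtain z where "X \<omega> < z" "ereal z < x0" using ereal_dense2 by force
    moreover obtain r where "r \<in> \<rat>" "X \<omega> < r" "r < z"
      using Rats_dense_in_real[OF \<open>X \<omega> < z\<close>] by blast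
    ultimately show "\<omega> \<in> (\<Union>r \<in> {r \<in> \<rat>. ereal r < x0}. {\<omega> \<in> space M. X \<omega> \<le> r})"
      using \<omega> less_trans[of "ereal r" "ereal z" x0] by (auto intro!: bexI[of _ r])
  qed
  have union: "(\<Union>r \<in> {r \<in> \<rat>. ereal r < x0}. {\<omega> \<in> space M. X \<omega> \<le> r}) \<in> null_sets M"
    by (rule null_sets_UN') (auto intro: countable_subset[OF _ countable_rat] null)
  have "{\<omega> \<in> space M. ereal (X \<omega>) < x0} \<in> sets M" by measurable
  from null_sets_subset[OF union this sub] pos show False
    by (simp add: measure_def null_setsD1)
qed

section \<open>The class \<open>S0plus\<close>\<close>

locale S0plus_fun =
  fixes \<tau> :: "real \<Rightarrow> real"
  assumes S0plus: "\<tau> \<in> S0plus"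
begin

abbreviation \<tau>' :: "real \<Rightarrow> real" where "\<tau>' \<equiv> tau' \<tau>"
abbreviation \<rho> :: "real \<Rightarrow> real" where "\<rho> \<equiv> rderiv (tau' \<tau>)"

lemma tau_0: "\<tau> 0 = 0"
  using S0plus by (simp add: S0plus_def)

lemma tau_mono: "0 \<le> x \<Longrightarrow> x \<le> y \<Longrightarrow> \<tau> x \<le> \<tau> y"
  using S0plus by (auto simp: S0plus_def mono_on_def)

lemma tau_nonneg: "0 \<le> x \<Longrightarrow> 0 \<le> \<tau> x"
  using tau_mono[of 0 x] tau_0 by simp

lemma tau_convex: "convex_on {0..} \<tau>"
  using S0plus by (simp add: S0plus_def)

lemma tau'_concave: "concave_on {0..} \<tau>'"
  using S0plus by (simp add: S0plus_def)

lemma tau'_pos: "0 < x \<Longrightarrow> 0 < \<tau>' x"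
  using S0plus by (simp add: S0plus_def)

lemma tau_has_real_derivative:
  assumes "0 < x" shows "(\<tau> has_real_derivative \<tau>' x) (at x)"
proof -
  have "\<tau> differentiable (at x)" using S0plus assms by (simp add: S0plus_def)
  then show ?thesis
    using assms by (simp add: tau'_def DERIV_deriv_iff_real_differentiable)
qed

lemma tau'_slopes:
  assumes "0 \<le> x" "x < y" "y < z"
  shows "(\<tau>' z - \<tau>' x) / (z - x) \<le> (\<tau>' y - \<tau>' x) / (y - x)"
    and "(\<tau>' z - \<tau>' y) / (z - y) \<le> (\<tau>' z - \<tau>' x) / (z - x)"
proof -
  have "convex_on {0..} (\<lambda>x. - \<tau>' x)" using tau'_concave by (simp add: concave_on_def)
  from convex_on_slope_le[OF this, of x z y] assms
  have "(- \<tau>' x - - \<tau>' y) / (x - y) \<le> (- \<tau>' x - - \<tau>' z) / (x - z)"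
    and "(- \<tau>' x - - \<tau>' z) / (x - z) \<le> (- \<tau>' y - - \<tau>' z) / (y - z)"
    by auto
  moreover have "(- \<tau>' a - - \<tau>' b) / (a - b) = - ((\<tau>' b - \<tau>' a) / (b - a))" for a b
    by (simp add: divide_minus_right[symmetric])
  ultimately show "(\<tau>' z - \<tau>' x) / (z - x) \<le> (\<tau>' y - \<tau>' x) / (y - x)"
    and "(\<tau>' z - \<tau>' y) / (z - y) \<le> (\<tau>' z - \<tau>' x) / (z - x)"
    by simp_all
qed

lemma tau'_mono_pos:
  assumes "0 < x" "x \<le> y" shows "\<tau>' x \<le> \<tau>' y"
proof (rule ccontr)
  assume "\<not> \<tau>' x \<le> \<tau>' y"
  then have lt: "\<tau>' y < \<tau>' x" by simp
  with assms have xy: "x < y" by (cases "x = y") auto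
  define s where "s = (\<tau>' y - \<tau>' x) / (y - x)"
  have s: "s < 0" using lt xy by (simp add: s_def divide_neg_pos)
  \<comment> \<open>a concave function with a negative chord slope becomes negative further right\<close>
  define z where "z = y + \<tau>' y / (- s) + 1"
  have y: "0 < \<tau>' y" using tau'_pos assms by simp
  then have yz: "y < z" using s by (simp add: z_def)
  have "(\<tau>' z - \<tau>' y) / (z - y) \<le> s"
    using tau'_slopes[of x y z] assms xy yz unfolding s_def by linarith
  then have "\<tau>' z - \<tau>' y \<le> s * (z - y)" using yz by (simp add: divide_le_eq)
  also have "s * (z - y) = - \<tau>' y + s" using s by (simp add: z_def field_simps)
  finally have "\<tau>' z < 0" using s by simp
  with tau'_pos[of z] yz assms show False by simp
qed

lemma tau'_0_nonneg: "0 \<le> \<tau>' 0"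
proof -
  have "(deriv \<tau> \<longlongrightarrow> Lim (at_right 0) (deriv \<tau>)) (at_right 0)"
    by (rule tendsto_Lim_at_right_0_mono[where B = 0])
      (use tau'_mono_pos tau'_pos in \<open>auto simp: tau'_def less_imp_le\<close>)
  moreover have "eventually (\<lambda>x. 0 \<le> deriv \<tau> x) (at_right 0)"
    unfolding eventually_at_right_field
    by (intro exI[of _ 1]) (use tau'_pos in \<open>auto simp: tau'_def less_imp_le\<close>)
  ultimately have "0 \<le> Lim (at_right 0) (deriv \<tau>)"
    by (intro tendsto_lowerbound) auto
  then show ?thesis by (simp add: tau'_def)
qed

lemma tau'_nonneg: "0 \<le> x \<Longrightarrow> 0 \<le> \<tau>' x"
  using tau'_0_nonneg tau'_pos[of x] by (cases "x = 0") auto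

lemma tau'_ge_scaled:
  assumes "0 \<le> x" "x \<le> y" "0 < y" shows "x / y * \<tau>' y \<le> \<tau>' x"
proof -
  have "(1 - x / y) * \<tau>' 0 + x / y * \<tau>' y \<le> \<tau>' ((1 - x / y) * 0 + x / y * y)"
    using concave_onD[OF tau'_concave, of "x / y" 0 y] assms by simp
  moreover have "0 \<le> (1 - x / y) * \<tau>' 0" using assms tau'_0_nonneg by simp
  ultimately show ?thesis using assms by simp
qed

lemma tau'_mono: "0 \<le> x \<Longrightarrow> x \<le> y \<Longrightarrow> \<tau>' x \<le> \<tau>' y"
proof (cases "x = 0 \<and> 0 < y")
  case True
  then have "(1 - 1 / 2) * \<tau>' 0 + 1 / 2 * \<tau>' y \<le> \<tau>' ((1 - 1 / 2) * 0 + 1 / 2 * y)"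
    using concave_onD[OF tau'_concave, of "1 / 2" 0 y] by simp
  with True tau'_mono_pos[of "y / 2" y] show ?thesis by simp
qed (use tau'_mono_pos in \<open>auto simp: order.order_iff_strict\<close>)

lemma tau'_subadditive:
  assumes "0 \<le> x" "0 \<le> y" shows "\<tau>' (x + y) \<le> \<tau>' x + \<tau>' y"
proof (cases "x + y = 0")
  case True
  then show ?thesis using assms tau'_nonneg by (simp add: add_nonneg_eq_0_iff)
next
  case False
  with assms have p: "0 < x + y" by simp
  have "x / (x + y) * \<tau>' (x + y) + y / (x + y) * \<tau>' (x + y) \<le> \<tau>' x + \<tau>' y"
    using tau'_ge_scaled[of x "x + y"] tau'_ge_scaled[of y "x + y"] assms p
    by (intro add_mono) auto
  also have "x / (x + y) * \<tau>' (x + y) + y / (x + y) * \<tau>' (x + y) = \<tau>' (x + y)"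
    using p by (simp flip: distrib_right add_divide_distrib)
  finally show ?thesis .
qed

lemma tau'_quotient_tendsto_rho:
  assumes Z: "0 < Z"
  shows "((\<lambda>h. (\<tau>' (Z + h) - \<tau>' Z) / h) \<longlongrightarrow> \<rho> Z) (at_right 0)"
  unfolding rderiv_def
proof (rule tendsto_Lim_at_right_0_antimono[where B = "(\<tau>' Z - \<tau>' 0) / Z"])
  fix x y :: real assume xy: "0 < x" "x \<le> y"
  show "(\<tau>' (Z + y) - \<tau>' Z) / y \<le> (\<tau>' (Z + x) - \<tau>' Z) / x"
  proof (cases "x = y")
    case False
    then have "Z < Z + x" "Z + x < Z + y" using xy by auto
    from tau'_slopes(1)[OF _ this] Z show ?thesis by simp
  qed simp
next
  fix h :: real assume h: "0 < h"
  show "(\<tau>' (Z + h) - \<tau>' Z) / h \<le> (\<tau>' Z - \<tau>' 0) / Z"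
    using tau'_slopes[of 0 Z "Z + h"] Z h by simp
qed

lemma rho_nonneg: assumes "0 < Z" shows "0 \<le> \<rho> Z"
proof (rule tendsto_lowerbound[OF tau'_quotient_tendsto_rho[OF assms]])
  show "\<forall>\<^sub>F h in at_right 0. 0 \<le> (\<tau>' (Z + h) - \<tau>' Z) / h"
    unfolding eventually_at_right_field
    by (intro exI[of _ 1]) (use assms in \<open>auto intro!: divide_nonneg_pos tau'_mono\<close>)
qed simp

lemma rho_le_slope:
  assumes "0 \<le> x" "x < y" "y \<le> Z"
  shows "\<rho> Z \<le> (\<tau>' y - \<tau>' x) / (y - x)"
proof (rule tendsto_upperbound[OF tau'_quotient_tendsto_rho])
  show "0 < Z" using assms by simp
  show "\<forall>\<^sub>F h in at_right 0. (\<tau>' (Z + h) - \<tau>' Z) / h \<le> (\<tau>' y - \<tau>' x) / (y - x)"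
    unfolding eventually_at_right_field
  proof (intro exI[of _ 1] allI impI conjI)
    fix h :: real assume h: "0 < h" "h < 1"
    have "(\<tau>' (Z + h) - \<tau>' Z) / h \<le> (\<tau>' (Z + h) - \<tau>' y) / (Z + h - y)"
      using tau'_slopes(2)[of y Z "Z + h"] assms h by (cases "y = Z") auto
    also have "\<dots> \<le> (\<tau>' (Z + h) - \<tau>' x) / (Z + h - x)"
      using tau'_slopes(2)[of x y "Z + h"] assms h by simp
    also have "\<dots> \<le> (\<tau>' y - \<tau>' x) / (y - x)"
      using tau'_slopes(1)[of x y "Z + h"] assms h by simp
    finally show "(\<tau>' (Z + h) - \<tau>' Z) / h \<le> (\<tau>' y - \<tau>' x) / (y - x)" .
  qed simp
qed simp

lemma rho_mult_le_tau'_diff: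
  assumes "0 \<le> x" "x \<le> y" "y \<le> Z" "0 < Z"
  shows "\<rho> Z * (y - x) \<le> \<tau>' y - \<tau>' x"
proof (cases "x = y")
  case False
  with assms have "x < y" by simp
  with rho_le_slope[OF assms(1) this assms(3)] show ?thesis by (simp add: le_divide_eq)
qed simp

lemma rho_pos_below_x0:
  assumes "0 < y" "ereal y < Inf (ereal ` {x. 0 < x \<and> \<rho> x = 0})"
  shows "0 < \<rho> y"
proof (rule ccontr)
  assume "\<not> 0 < \<rho> y"
  with rho_nonneg[OF assms(1)] have "\<rho> y = 0" by simp
  then have "Inf (ereal ` {x. 0 < x \<and> \<rho> x = 0}) \<le> ereal y"
    using assms(1) by (intro Inf_lower) auto
  with assms(2) show False by simp
qed

lemma tau_continuous_on: "continuous_on {0..} \<tau>"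
proof (rule continuous_on_eq_continuous_within[THEN iffD2], intro ballI)
  fix x :: real assume x: "x \<in> {0..}"
  show "continuous (at x within {0..}) \<tau>"
  proof (cases "x = 0")
    case False
    with x have "0 < x" by simp
    then have "isCont \<tau> x" by (rule DERIV_isCont[OF tau_has_real_derivative])
    then show ?thesis using continuous_at_imp_continuous_at_within by blast
  next
    case True
    have "(\<tau> \<longlongrightarrow> 0) (at 0 within {0..})"
    proof (rule tendsto_sandwich[where f = "\<lambda>_. 0" and h = "\<lambda>y. y * \<tau> 1"])
      show "\<forall>\<^sub>F y in at 0 within {0..}. 0 \<le> \<tau> y"
        by (auto simp: eventually_at_filter tau_nonneg)
      have "\<forall>\<^sub>F y in at 0 within {0..}. y \<in> {0..(1::real)}"
        by (subst eventually_at, rule exI[of _ 1]) (auto simp: dist_real_def)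
      then show "\<forall>\<^sub>F y in at 0 within {0..}. \<tau> y \<le> y * \<tau> 1"
      proof (rule eventually_mono)
        fix y :: real assume "y \<in> {0..1}"
        then have "\<tau> ((1 - y) *\<^sub>R 0 + y *\<^sub>R 1) \<le> (1 - y) * \<tau> 0 + y * \<tau> 1"
          by (intro convex_onD[OF tau_convex]) auto
        then show "\<tau> y \<le> y * \<tau> 1" using tau_0 by simp
      qed
      show "((\<lambda>y. y * \<tau> 1) \<longlongrightarrow> 0) (at 0 within {0..})"
        by (rule tendsto_mult_left_zero[OF tendsto_ident_at])
    qed simp
    with True tau_0 show ?thesis by (simp add: continuous_within)
  qed
qed

lemma tau_continuous_on_subset: "S \<subseteq> {0..} \<Longrightarrow> continuous_on S \<tau>"
  using tau_continuous_on continuous_on_subset by blast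

lemma tau_diff_le: assumes "0 \<le> x" "x \<le> y" shows "\<tau> y - \<tau> x \<le> \<tau>' y * (y - x)"
proof -
  have "\<tau>' y * x - \<tau> x \<le> \<tau>' y * y - \<tau> y"
  proof (rule le_by_nonneg_derivative[OF assms(2)])
    show "continuous_on {x..y} (\<lambda>t. \<tau>' y * t - \<tau> t)"
      by (intro continuous_intros tau_continuous_on_subset) (use assms in auto)
    fix t assume t: "x < t" "t < y"
    show "((\<lambda>t. \<tau>' y * t - \<tau> t) has_real_derivative \<tau>' y * 1 - \<tau>' t) (at t)"
      by (intro derivative_intros tau_has_real_derivative) (use t assms in auto)
    show "0 \<le> \<tau>' y * 1 - \<tau>' t" using tau'_mono[of t y] t assms by simp
  qed
  then show ?thesis by (simp add: algebra_simps)
qed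

lemma tau_abs_diff_le:
  assumes "0 \<le> b" "0 \<le> c"
  shows "\<bar>\<tau> b - \<tau> c\<bar> \<le> \<bar>b - c\<bar> * (\<tau>' c + \<tau>' \<bar>b - c\<bar>)"
proof (cases "c \<le> b")
  case True
  have "\<tau> b - \<tau> c \<le> \<tau>' b * (b - c)" by (rule tau_diff_le) (use assms True in auto)
  also have "\<dots> \<le> (\<tau>' c + \<tau>' (b - c)) * (b - c)"
    using tau'_subadditive[of c "b - c"] assms True by (intro mult_right_mono) auto
  finally show ?thesis using tau_mono[of c b] assms True by (simp add: mult.commute)
next
  case False
  have "\<tau> c - \<tau> b \<le> \<tau>' c * (c - b)" by (rule tau_diff_le) (use assms False in auto)
  also have "\<dots> \<le> (\<tau>' c + \<tau>' (c - b)) * (c - b)"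
    using tau'_nonneg[of "c - b"] False by (intro mult_right_mono) auto
  finally show ?thesis using tau_mono[of b c] assms False by (simp add: mult.commute abs_if)
qed

lemma mult_tau'_le_two_tau: assumes "0 \<le> D" shows "D * \<tau>' D \<le> 2 * \<tau> D"
proof (cases "D = 0")
  case False
  with assms have D: "0 < D" by simp
  \<comment> \<open>\<open>\<tau>' t \<ge> t \<tau>'(D) / D\<close> on \<open>[0, D]\<close>; integrate\<close>
  have "\<tau> 0 - \<tau>' D / D * 0\<^sup>2 / 2 \<le> \<tau> D - \<tau>' D / D * D\<^sup>2 / 2"
  proof (rule le_by_nonneg_derivative[where f = "\<lambda>t. \<tau> t - \<tau>' D / D * t\<^sup>2 / 2"])
    show "continuous_on {0..D} (\<lambda>t. \<tau> t - \<tau>' D / D * t\<^sup>2 / 2)"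
      by (intro continuous_intros tau_continuous_on_subset) auto
    fix t assume t: "0 < t" "t < D"
    show "((\<lambda>t. \<tau> t - \<tau>' D / D * t\<^sup>2 / 2) has_real_derivative \<tau>' t - \<tau>' D / D * (2 * t) / 2) (at t)"
      using D by (auto intro!: derivative_eq_intros tau_has_real_derivative t)
    have "t / D * \<tau>' D \<le> \<tau>' t" by (rule tau'_ge_scaled) (use t in auto)
    then show "0 \<le> \<tau>' t - \<tau>' D / D * (2 * t) / 2" by (simp add: field_simps)
  qed (use D in auto)
  with D tau_0 show ?thesis by (simp add: power2_eq_square) (simp only: mult.commute)
qed (simp add: tau_0)

lemma tau_pos: assumes "0 < d" shows "0 < \<tau> d"
  using mult_tau'_le_two_tau[of d] tau'_pos[OF assms] assms
  by (smt (verit) mult_pos_pos)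

lemma tau_le_scaled: assumes "0 < d" "d \<le> D" shows "\<tau> d \<le> d / D * \<tau> D"
  using convex_onD[OF tau_convex, of "d / D" 0 D] assms tau_0 by simp

lemma tau_midpoint_convex:
  assumes "0 \<le> a" "0 \<le> b" shows "2 * \<tau> ((a + b) / 2) \<le> \<tau> a + \<tau> b"
  using convex_onD[OF tau_convex, of "1 / 2" a b] assms by (simp add: field_simps)

lemma tau_ge_sub_tau':
  assumes "0 \<le> b" "0 \<le> D" "0 \<le> R" "D - R \<le> b"
  shows "\<tau> D - \<tau>' D * R \<le> \<tau> b"
proof (cases "D \<le> b")
  case True
  then show ?thesis
    using tau_mono[of D b] assms tau'_nonneg[of D] by (smt (verit) mult_nonneg_nonneg)
next
  case False
  then have "\<tau> D - \<tau> b \<le> \<tau>' D * (D - b)" by (intro tau_diff_le) (use assms in auto)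
  also have "\<dots> \<le> \<tau>' D * R" using assms tau'_nonneg[of D] by (intro mult_left_mono) auto
  finally show ?thesis by simp
qed

lemma rho_sq_le_midpoint_defect:
  assumes "0 \<le> a" "a \<le> b" "b \<le> Z" "0 < Z"
  shows "\<rho> Z * (b - a)\<^sup>2 / 4 \<le> \<tau> a + \<tau> b - 2 * \<tau> ((a + b) / 2)"
proof -
  define s where "s = (a + b) / 2"
  define h where "h = (b - a) / 2"
  have sa: "s - h = a" and sb: "s + h = b" by (simp_all add: s_def h_def field_simps)
  let ?\<chi> = "\<lambda>t. \<tau> (s + t) + \<tau> (s - t) - 2 * \<tau> s - \<rho> Z * t\<^sup>2"
  have "?\<chi> 0 \<le> ?\<chi> h"
  proof (rule le_by_nonneg_derivative[where f = ?\<chi>])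
    show "0 \<le> h" using assms by (simp add: h_def)
    have "continuous_on {0..h} (\<lambda>t. \<tau> (s + t))" "continuous_on {0..h} (\<lambda>t. \<tau> (s - t))"
      by (rule continuous_on_compose2[OF tau_continuous_on];
          use assms sa in \<open>auto intro!: continuous_intros\<close>)+
    then show "continuous_on {0..h} ?\<chi>" by (intro continuous_intros) auto
    fix t assume t: "0 < t" "t < h"
    then have p1: "0 < s + t" and p2: "0 < s - t" using assms sa by auto
    show "(?\<chi> has_real_derivative \<tau>' (s + t) - \<tau>' (s - t) - \<rho> Z * (2 * t)) (at t)"
      by (auto intro!: derivative_eq_intros DERIV_chain2[where f = \<tau>]
          tau_has_real_derivative p1 p2)
    have "\<rho> Z * ((s + t) - (s - t)) \<le> \<tau>' (s + t) - \<tau>' (s - t)"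
      by (rule rho_mult_le_tau'_diff) (use t assms sa sb in auto)
    then show "0 \<le> \<tau>' (s + t) - \<tau>' (s - t) - \<rho> Z * (2 * t)" by simp
  qed
  moreover have "h\<^sup>2 = (b - a)\<^sup>2 / 4" by (simp add: h_def power2_eq_square field_simps)
  ultimately show ?thesis using sa sb by (simp add: s_def)
qed

lemma rho_sq_diff_le_tau_diff:
  assumes "0 \<le> c" "c \<le> s" "s \<le> Z" "0 < Z"
  shows "\<rho> Z * (s\<^sup>2 - c\<^sup>2) / 2 \<le> \<tau> s - \<tau> c"
proof -
  have "\<tau> c - \<rho> Z * c\<^sup>2 / 2 \<le> \<tau> s - \<rho> Z * s\<^sup>2 / 2"
  proof (rule le_by_nonneg_derivative[where f = "\<lambda>t. \<tau> t - \<rho> Z * t\<^sup>2 / 2", OF assms(2)])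
    show "continuous_on {c..s} (\<lambda>t. \<tau> t - \<rho> Z * t\<^sup>2 / 2)"
      by (intro continuous_intros tau_continuous_on_subset) (use assms in auto)
    fix t assume t: "c < t" "t < s"
    show "((\<lambda>t. \<tau> t - \<rho> Z * t\<^sup>2 / 2) has_real_derivative \<tau>' t - \<rho> Z * (2 * t) / 2) (at t)"
      using t assms by (auto intro!: derivative_eq_intros tau_has_real_derivative)
    have "\<rho> Z * (t - 0) \<le> \<tau>' t - \<tau>' 0"
      by (rule rho_mult_le_tau'_diff) (use t assms in auto)
    then show "0 \<le> \<tau>' t - \<rho> Z * (2 * t) / 2" using tau'_0_nonneg by simp
  qed
  then show ?thesis by (simp add: field_simps)
qed

text \<open>Used with \<open>a, b, c\<close> the distances from an observation to \<open>m\<close>, to \<open>q\<close> and to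
  their midpoint, and \<open>D = d(q, m)\<close>; the hypotheses on \<open>c\<close> are the Hadamard inequalities.\<close>
lemma rho_sq_le_three_point_defect:
  assumes "0 < Z" "0 \<le> a" "a \<le> Z" "0 \<le> b" "b \<le> Z" "0 \<le> c" "c \<le> (a + b) / 2"
    and "c\<^sup>2 \<le> (a\<^sup>2 + b\<^sup>2) / 2 - D\<^sup>2 / 4"
  shows "\<rho> Z * D\<^sup>2 / 4 \<le> \<tau> a + \<tau> b - 2 * \<tau> c"
proof -
  have mid: "\<rho> Z * (b - a)\<^sup>2 / 4 \<le> \<tau> a + \<tau> b - 2 * \<tau> ((a + b) / 2)"
    using rho_sq_le_midpoint_defect[of a b Z] rho_sq_le_midpoint_defect[of b a Z] assms
    by (cases "a \<le> b") (auto simp: power2_commute add.commute)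
  have shift: "\<rho> Z * (((a + b) / 2)\<^sup>2 - c\<^sup>2) / 2 \<le> \<tau> ((a + b) / 2) - \<tau> c"
    by (rule rho_sq_diff_le_tau_diff) (use assms in auto)
  have "D\<^sup>2 / 4 \<le> (a\<^sup>2 + b\<^sup>2) / 2 - c\<^sup>2" using assms(8) by linarith
  from mult_left_mono[OF this rho_nonneg[OF assms(1)]]
  have "\<rho> Z * D\<^sup>2 / 4 \<le> \<rho> Z * ((a\<^sup>2 + b\<^sup>2) / 2 - c\<^sup>2)" by simp
  also have "\<dots> = \<rho> Z * (b - a)\<^sup>2 / 4 + 2 * (\<rho> Z * (((a + b) / 2)\<^sup>2 - c\<^sup>2) / 2)"
    by (simp add: power2_eq_square field_simps)
  also have "\<dots> \<le> \<tau> a + \<tau> b - 2 * \<tau> c" using mid shift by simp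
  finally show ?thesis .
qed

lemma tau_three_point_defect_ge:
  assumes "0 \<le> a" "a \<le> R" "0 \<le> b" "0 \<le> E" "E - R \<le> b" "0 \<le> c" "c \<le> E / 2 + R"
  shows "\<tau> E - 2 * \<tau> (E / 2) - R * (3 * \<tau>' E + 2 * \<tau>' R) \<le> \<tau> a + \<tau> b - 2 * \<tau> c"
proof -
  have "\<tau> c \<le> \<tau> (E / 2 + R)" using assms by (intro tau_mono) auto
  also have "\<dots> \<le> \<tau> (E / 2) + \<tau>' (E / 2 + R) * R"
    using tau_diff_le[of "E / 2" "E / 2 + R"] assms by simp
  also have "\<tau>' (E / 2 + R) * R \<le> (\<tau>' E + \<tau>' R) * R"
    using tau'_subadditive[of "E / 2" R] tau'_mono[of "E / 2" E] assms
    by (intro mult_right_mono) auto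
  finally have "\<tau> c \<le> \<tau> (E / 2) + (\<tau>' E + \<tau>' R) * R" by simp
  moreover have "\<tau> E - \<tau>' E * R \<le> \<tau> b" using assms by (intro tau_ge_sub_tau') auto
  moreover have "0 \<le> \<tau> a" using assms by (intro tau_nonneg)
  ultimately show ?thesis by (simp add: algebra_simps)
qed

lemma dyadic_sum_tau'_le:
  assumes "0 < \<delta>" "0 < D" "D < 2 ^ k * \<delta>"
  shows "(\<Sum>j<k. 2 ^ j * \<tau>' (D / 2 ^ j)) \<le> 2 ^ k / 2 ^ L * \<tau>' D + 2 ^ k * \<tau>' (2 ^ L * \<delta>)"
proof -
  \<comment> \<open>all but the first \<open>k - L\<close> arguments \<open>D / 2^j\<close> lie below \<open>2^L \<delta>\<close>\<close>
  have "2 ^ j * \<tau>' (D / 2 ^ j)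
      \<le> (if j + L < k then 2 ^ j else 0) * \<tau>' D + 2 ^ j * \<tau>' (2 ^ L * \<delta>)" for j
  proof (cases "j + L < k")
    case True
    have "\<tau>' (D / 2 ^ j) \<le> \<tau>' D"
      using assms by (intro tau'_mono) (auto simp: divide_le_eq)
    with tau'_nonneg[of "2 ^ L * \<delta>"] assms
    have "2 ^ j * \<tau>' (D / 2 ^ j) \<le> 2 ^ j * (\<tau>' D + \<tau>' (2 ^ L * \<delta>))"
      by (intro mult_left_mono) auto
    with True show ?thesis by (simp add: distrib_left)
  next
    case False
    have "D < 2 ^ k * \<delta>" by fact
    also have "\<dots> \<le> 2 ^ (j + L) * \<delta>"
      using False assms by (intro mult_right_mono power_increasing) auto
    finally have "D / 2 ^ j \<le> 2 ^ L * \<delta>"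
      by (simp add: power_add divide_le_eq mult_ac)
    then have "\<tau>' (D / 2 ^ j) \<le> \<tau>' (2 ^ L * \<delta>)" using assms by (intro tau'_mono) auto
    with False show ?thesis by simp
  qed
  then have "(\<Sum>j<k. 2 ^ j * \<tau>' (D / 2 ^ j))
      \<le> (\<Sum>j<k. (if j + L < k then 2 ^ j else 0) * \<tau>' D + 2 ^ j * \<tau>' (2 ^ L * \<delta>))"
    by (intro sum_mono)
  also have "\<dots> = (\<Sum>j<k. if j + L < k then (2::real) ^ j else 0) * \<tau>' D
      + (2 ^ k - 1) * \<tau>' (2 ^ L * \<delta>)"
    by (simp add: sum.distrib sum_lessThan_power2 flip: sum_distrib_right)
  also have "\<dots> \<le> 2 ^ k / 2 ^ L * \<tau>' D + 2 ^ k * \<tau>' (2 ^ L * \<delta>)"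
    using sum_power2_below_le[where k = k and L = L] tau'_nonneg[of D] tau'_nonneg[of "2 ^ L * \<delta>"] assms
    by (intro add_mono mult_right_mono) auto
  finally show ?thesis .
qed

lemma dyadic_defect_sum_ge:
  assumes "0 < \<delta>" "0 \<le> R" "24 * R < 2 ^ L * \<delta>" "0 < D"
    and "D < 2 ^ k * \<delta>" "2 ^ k * \<delta> \<le> 2 * D"
  shows "\<tau> D / 2 - D * (2 / \<delta> * (\<tau> \<delta> + 3 * R * \<tau>' (2 ^ L * \<delta>) + 2 * R * \<tau>' R))
    \<le> (\<Sum>j<k. 2 ^ j * (\<tau> (D / 2 ^ j) - 2 * \<tau> (D / 2 ^ Suc j)
                       - R * (3 * \<tau>' (D / 2 ^ j) + 2 * \<tau>' R)))"
proof -
  define S where "S = (\<Sum>j<k. 2 ^ j * \<tau>' (D / 2 ^ j))"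
  define X where "X = 2 * D / \<delta>"
  have pk: "2 ^ k \<le> X" and "0 \<le> X" using assms by (simp_all add: X_def field_simps)
  have "(\<Sum>j<k. 2 ^ j * (\<tau> (D / 2 ^ j) - 2 * \<tau> (D / 2 ^ Suc j)
                          - R * (3 * \<tau>' (D / 2 ^ j) + 2 * \<tau>' R)))
      = (\<Sum>j<k. (2 ^ j * \<tau> (D / 2 ^ j) - 2 ^ Suc j * \<tau> (D / 2 ^ Suc j))
               - 3 * R * (2 ^ j * \<tau>' (D / 2 ^ j)) - 2 * R * \<tau>' R * 2 ^ j)"
    by (rule sum.cong) (simp_all add: algebra_simps)
  also have "\<dots> = (\<Sum>j<k. 2 ^ j * \<tau> (D / 2 ^ j) - 2 ^ Suc j * \<tau> (D / 2 ^ Suc j))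
      - 3 * R * S - 2 * R * \<tau>' R * (2 ^ k - 1)"
    by (simp add: sum_subtractf sum_distrib_left S_def flip: sum_lessThan_power2)
  also have "(\<Sum>j<k. 2 ^ j * \<tau> (D / 2 ^ j) - 2 ^ Suc j * \<tau> (D / 2 ^ Suc j))
      = \<tau> D - 2 ^ k * \<tau> (D / 2 ^ k)"
    using sum_lessThan_telescope'[of "\<lambda>j. 2 ^ j * \<tau> (D / 2 ^ j)" k] by simp
  finally have sum_eq: "(\<Sum>j<k. 2 ^ j * (\<tau> (D / 2 ^ j) - 2 * \<tau> (D / 2 ^ Suc j)
                          - R * (3 * \<tau>' (D / 2 ^ j) + 2 * \<tau>' R)))
      = \<tau> D - 2 ^ k * \<tau> (D / 2 ^ k) - 3 * R * S - 2 * R * \<tau>' R * (2 ^ k - 1)" .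
  have "D / 2 ^ k \<le> \<delta>" using assms(5) by (simp add: field_simps)
  then have "\<tau> (D / 2 ^ k) \<le> \<tau> \<delta>" using assms by (intro tau_mono) auto
  with pk \<open>0 \<le> X\<close> tau_nonneg[of "D / 2 ^ k"] assms
  have tail: "2 ^ k * \<tau> (D / 2 ^ k) \<le> X * \<tau> \<delta>"
    by (intro mult_mono) auto
  have "S \<le> 2 ^ k / 2 ^ L * \<tau>' D + 2 ^ k * \<tau>' (2 ^ L * \<delta>)"
    unfolding S_def using assms(1,4,5) by (rule dyadic_sum_tau'_le)
  also have "\<dots> \<le> X / 2 ^ L * \<tau>' D + X * \<tau>' (2 ^ L * \<delta>)"
    using pk tau'_nonneg[of D] tau'_nonneg[of "2 ^ L * \<delta>"] assms
    by (intro add_mono mult_right_mono divide_right_mono) auto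
  finally have "3 * R * S \<le> 3 * R * (X / 2 ^ L * \<tau>' D + X * \<tau>' (2 ^ L * \<delta>))"
    using assms by (intro mult_left_mono) auto
  then have "3 * R * S \<le> 3 * R * (X / 2 ^ L * \<tau>' D) + 3 * R * X * \<tau>' (2 ^ L * \<delta>)"
    by (simp add: algebra_simps)
  moreover have "3 * R * (X / 2 ^ L * \<tau>' D) \<le> \<tau> D / 2"
  proof -
    have "3 * R * (X / 2 ^ L * \<tau>' D) = 6 * R / (\<delta> * 2 ^ L) * (D * \<tau>' D)"
      by (simp add: X_def field_simps)
    also have "\<dots> \<le> 6 * R / (\<delta> * 2 ^ L) * (2 * \<tau> D)"
      using mult_tau'_le_two_tau[of D] assms by (intro mult_left_mono) auto
    also have "\<dots> = 12 * R / (\<delta> * 2 ^ L) * \<tau> D" by simp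
    also have "\<dots> \<le> 1 / 2 * \<tau> D"
      using tau_nonneg[of D] assms by (intro mult_right_mono) (auto simp: field_simps)
    finally show ?thesis by simp
  qed
  moreover have "2 * R * \<tau>' R * (2 ^ k - 1) \<le> 2 * R * \<tau>' R * X"
    using pk tau'_nonneg[of R] assms by (intro mult_left_mono) auto
  moreover have "D * (2 / \<delta> * (\<tau> \<delta> + 3 * R * \<tau>' (2 ^ L * \<delta>) + 2 * R * \<tau>' R))
      = X * \<tau> \<delta> + 3 * R * X * \<tau>' (2 ^ L * \<delta>) + 2 * R * \<tau>' R * X"
    using assms(1) by (simp add: X_def field_simps)
  ultimately show ?thesis
    unfolding sum_eq using tail by linarith
qed

lemma tau_dist_diff_le:
  fixes y p q :: "'a::metric_space"
  shows "\<bar>\<tau> (dist y q) - \<tau> (dist y p)\<bar> \<le> dist q p * (\<tau>' (dist y p) + \<tau>' (dist q p))"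
proof -
  have e: "\<bar>dist y q - dist y p\<bar> \<le> dist q p"
    using abs_dist_diff_le[of q y p] by (simp add: dist_commute)
  have "\<bar>\<tau> (dist y q) - \<tau> (dist y p)\<bar>
      \<le> \<bar>dist y q - dist y p\<bar> * (\<tau>' (dist y p) + \<tau>' \<bar>dist y q - dist y p\<bar>)"
    by (rule tau_abs_diff_le) auto
  also have "\<dots> \<le> dist q p * (\<tau>' (dist y p) + \<tau>' (dist q p))"
    using e tau'_nonneg tau'_mono[OF _ e] by (intro mult_mono add_mono) auto
  finally show ?thesis .
qed

end

section \<open>Midpoints in Hadamard spaces\<close>

definition hadamard_mid :: "'a::metric_space \<Rightarrow> 'a \<Rightarrow> 'a" where
  "hadamard_mid x y =
     (SOME \<mu>. \<forall>q. dist q \<mu> ^ 2 \<le> dist x q ^ 2 / 2 + dist y q ^ 2 / 2 - dist x y ^ 2 / 4)"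

lemma dist_hadamard_mid_sq_le:
  fixes x y q :: "'a::metric_space"
  assumes "hadamard TYPE('a)"
  shows "dist q (hadamard_mid x y) ^ 2 \<le> dist x q ^ 2 / 2 + dist y q ^ 2 / 2 - dist x y ^ 2 / 4"
proof -
  have "\<exists>\<mu>. \<forall>q. dist q \<mu> ^ 2 \<le> dist x q ^ 2 / 2 + dist y q ^ 2 / 2 - dist x y ^ 2 / 4"
    using assms unfolding hadamard_def by blast
  from someI_ex[OF this] show ?thesis unfolding hadamard_mid_def by blast
qed

lemma dist_hadamard_mid:
  fixes x y :: "'a::metric_space"
  assumes "hadamard TYPE('a)"
  shows "dist x (hadamard_mid x y) = dist x y / 2" and "dist y (hadamard_mid x y) = dist x y / 2"
proof -
  have "dist x (hadamard_mid x y) ^ 2 \<le> (dist x y / 2) ^ 2"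
    and "dist y (hadamard_mid x y) ^ 2 \<le> (dist x y / 2) ^ 2"
    using dist_hadamard_mid_sq_le[OF assms, of x x y] dist_hadamard_mid_sq_le[OF assms, of y x y]
    by (simp_all add: power2_eq_square dist_commute field_simps)
  then have "dist x (hadamard_mid x y) \<le> dist x y / 2" "dist y (hadamard_mid x y) \<le> dist x y / 2"
    by (auto intro: power2_le_imp_le)
  moreover have "dist x y \<le> dist x (hadamard_mid x y) + dist y (hadamard_mid x y)"
    by (metis dist_commute dist_triangle)
  ultimately show "dist x (hadamard_mid x y) = dist x y / 2" "dist y (hadamard_mid x y) = dist x y / 2"
    by linarith+
qed

lemma dist_hadamard_mid_le:
  fixes x y q :: "'a::metric_space"
  assumes "hadamard TYPE('a)"
  shows "dist q (hadamard_mid x y) \<le> (dist x q + dist y q) / 2"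
proof -
  have "\<bar>dist x q - dist y q\<bar> \<le> dist x y"
    by (metis abs_le_iff dist_commute dist_triangle2 dist_triangle3 diff_le_eq minus_diff_eq)
  then have "(dist x q - dist y q)\<^sup>2 \<le> (dist x y)\<^sup>2"
    by (metis abs_ge_zero power2_abs power_mono)
  then have "dist q (hadamard_mid x y) ^ 2 \<le> ((dist x q + dist y q) / 2) ^ 2"
    using dist_hadamard_mid_sq_le[OF assms, of q x y] by (simp add: power2_eq_square field_simps)
  then show ?thesis by (rule power2_le_imp_le) simp
qed

lemma dist_funpow_hadamard_mid:
  fixes m q :: "'a::metric_space"
  assumes "hadamard TYPE('a)"
  shows "dist m ((hadamard_mid m ^^ j) q) = dist q m / 2 ^ j"
  by (induction j) (simp_all add: dist_hadamard_mid(1)[OF assms] dist_commute)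

section \<open>The excess risk around a minimiser\<close>

locale frechet_excess = S0plus_fun \<tau> + prob_space M
  for \<tau> :: "real \<Rightarrow> real" and M :: "'w measure" +
  fixes Y :: "'w \<Rightarrow> 'a::metric_space" and ob m :: 'a
  assumes hadamard: "hadamard TYPE('a)"
    and Y_measurable: "Y \<in> measurable M borel"
    and integrable_tau'_ob: "integrable M (\<lambda>\<omega>. tau' \<tau> (dist (Y \<omega>) ob))"
    and argmin: "\<And>q. (\<integral>\<omega>. \<tau> (dist (Y \<omega>) m) - \<tau> (dist (Y \<omega>) ob) \<partial>M)
                      \<le> (\<integral>\<omega>. \<tau> (dist (Y \<omega>) q) - \<tau> (dist (Y \<omega>) ob) \<partial>M)"
begin

lemma measurable_dist_Y[measurable]: "(\<lambda>\<omega>. dist (Y \<omega>) q) \<in> borel_measurable M"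
  by (rule measurable_compose[OF Y_measurable borel_measurable_continuous_onI])
    (intro continuous_intros)

lemma measurable_mono_comp_dist_Y:
  fixes f :: "real \<Rightarrow> real"
  assumes "\<And>x y. 0 \<le> x \<Longrightarrow> x \<le> y \<Longrightarrow> f x \<le> f y"
  shows "(\<lambda>\<omega>. f (dist (Y \<omega>) q)) \<in> borel_measurable M"
proof -
  have "mono (\<lambda>x. f (max 0 x))" by (auto simp: mono_def intro!: assms)
  then have "(\<lambda>x. f (max 0 x)) \<in> borel_measurable borel" by (rule borel_measurable_mono)
  from measurable_compose[OF measurable_dist_Y this] show ?thesis by simp
qed

lemma measurable_tau_dist_Y[measurable]: "(\<lambda>\<omega>. \<tau> (dist (Y \<omega>) q)) \<in> borel_measurable M"
  by (rule measurable_mono_comp_dist_Y) (rule tau_mono)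

lemma measurable_tau'_dist_Y[measurable]: "(\<lambda>\<omega>. \<tau>' (dist (Y \<omega>) q)) \<in> borel_measurable M"
  by (rule measurable_mono_comp_dist_Y) (rule tau'_mono)

lemma integrable_tau'_dist_Y: "integrable M (\<lambda>\<omega>. \<tau>' (dist (Y \<omega>) p))"
proof (rule Bochner_Integration.integrable_bound)
  show "integrable M (\<lambda>\<omega>. \<tau>' (dist (Y \<omega>) ob) + \<tau>' (dist ob p))"
    by (intro Bochner_Integration.integrable_add integrable_tau'_ob integrable_const)
  show "AE \<omega> in M. norm (\<tau>' (dist (Y \<omega>) p)) \<le> norm (\<tau>' (dist (Y \<omega>) ob) + \<tau>' (dist ob p))"
  proof (rule AE_I2)
    fix \<omega>
    have "\<tau>' (dist (Y \<omega>) p) \<le> \<tau>' (dist (Y \<omega>) ob + dist ob p)"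
      by (rule tau'_mono) (auto intro: dist_triangle)
    also have "\<dots> \<le> \<tau>' (dist (Y \<omega>) ob) + \<tau>' (dist ob p)" by (rule tau'_subadditive) auto
    finally show "norm (\<tau>' (dist (Y \<omega>) p)) \<le> norm (\<tau>' (dist (Y \<omega>) ob) + \<tau>' (dist ob p))"
      using tau'_nonneg by simp
  qed
qed measurable

lemma integrable_tau_dist_Y_diff: "integrable M (\<lambda>\<omega>. \<tau> (dist (Y \<omega>) q) - \<tau> (dist (Y \<omega>) p))"
proof (rule Bochner_Integration.integrable_bound)
  show "integrable M (\<lambda>\<omega>. dist q p * (\<tau>' (dist (Y \<omega>) p) + \<tau>' (dist q p)))"
    by (intro integrable_mult_right Bochner_Integration.integrable_add integrable_tau'_dist_Y
        integrable_const)
  show "AE \<omega> in M. norm (\<tau> (dist (Y \<omega>) q) - \<tau> (dist (Y \<omega>) p))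
      \<le> norm (dist q p * (\<tau>' (dist (Y \<omega>) p) + \<tau>' (dist q p)))"
    using tau_dist_diff_le tau'_nonneg by (intro AE_I2) simp
qed measurable

definition F :: "'a \<Rightarrow> real" where
  "F q = (\<integral>\<omega>. \<tau> (dist (Y \<omega>) q) - \<tau> (dist (Y \<omega>) ob) \<partial>M)"

lemma F_min: "F m \<le> F q"
  using argmin by (simp add: F_def)

lemma integral_tau_dist_Y_diff:
  "(\<integral>\<omega>. \<tau> (dist (Y \<omega>) q) - \<tau> (dist (Y \<omega>) p) \<partial>M) = F q - F p"
  unfolding F_def
  by (simp flip: Bochner_Integration.integral_diff add: integrable_tau_dist_Y_diff)

lemma excess_le: "F q - F m \<le> dist q m * ((\<integral>\<omega>. \<tau>' (dist (Y \<omega>) m) \<partial>M) + \<tau>' (dist q m))"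
proof -
  have "F q - F m = (\<integral>\<omega>. \<tau> (dist (Y \<omega>) q) - \<tau> (dist (Y \<omega>) m) \<partial>M)"
    by (rule integral_tau_dist_Y_diff[symmetric])
  also have "\<dots> \<le> (\<integral>\<omega>. dist q m * (\<tau>' (dist (Y \<omega>) m) + \<tau>' (dist q m)) \<partial>M)"
    using tau_dist_diff_le
    by (intro integral_mono integrable_tau_dist_Y_diff integrable_mult_right
        Bochner_Integration.integrable_add integrable_tau'_dist_Y integrable_const)
      (auto simp: abs_le_iff)
  also have "\<dots> = dist q m * ((\<integral>\<omega>. \<tau>' (dist (Y \<omega>) m) \<partial>M) + \<tau>' (dist q m))"
    using integrable_tau'_dist_Y prob_space by (simp add: Bochner_Integration.integral_add)
  finally show ?thesis .
qed

lemma excess_le_linear_near: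
  assumes "0 < \<delta>"
  shows "\<exists>c>0. \<forall>q. dist q m < \<delta> \<longrightarrow> F q - F m \<le> c * dist q m"
proof -
  define c where "c = (\<integral>\<omega>. \<tau>' (dist (Y \<omega>) m) \<partial>M) + \<tau>' \<delta> + 1"
  have "0 \<le> (\<integral>\<omega>. \<tau>' (dist (Y \<omega>) m) \<partial>M)"
    by (intro Bochner_Integration.integral_nonneg tau'_nonneg) simp
  moreover have "F q - F m \<le> c * dist q m" if "dist q m < \<delta>" for q
  proof -
    have "F q - F m \<le> dist q m * ((\<integral>\<omega>. \<tau>' (dist (Y \<omega>) m) \<partial>M) + \<tau>' (dist q m))"
      by (rule excess_le)
    also have "\<dots> \<le> dist q m * c"
      using tau'_mono[of "dist q m" \<delta>] that by (intro mult_left_mono) (auto simp: c_def)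
    finally show ?thesis by (simp add: mult.commute)
  qed
  ultimately show ?thesis
    using tau'_nonneg[of \<delta>] assms by (intro exI[of _ c]) (auto simp: c_def)
qed

lemma excess_le_tau_far:
  assumes "0 < \<delta>"
  shows "\<exists>c>0. \<forall>q. \<delta> \<le> dist q m \<longrightarrow> F q - F m \<le> c * \<tau> (dist q m)"
proof -
  define G where "G = (\<integral>\<omega>. \<tau>' (dist (Y \<omega>) m) \<partial>M)"
  have "0 \<le> G" unfolding G_def by (intro Bochner_Integration.integral_nonneg tau'_nonneg) simp
  have "0 < \<tau> \<delta>" using tau_pos assms by simp
  moreover have "F q - F m \<le> (G * \<delta> / \<tau> \<delta> + 2) * \<tau> (dist q m)" if q: "\<delta> \<le> dist q m" for q
  proof -
    let ?D = "dist q m"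
    have "0 < ?D" using assms q by linarith
    have "\<tau> \<delta> \<le> \<delta> / ?D * \<tau> ?D" using tau_le_scaled assms q by simp
    then have D: "?D \<le> \<delta> * \<tau> ?D / \<tau> \<delta>"
      using \<open>0 < \<tau> \<delta>\<close> \<open>0 < ?D\<close> by (simp add: field_simps)
    have "F q - F m \<le> ?D * G + ?D * \<tau>' ?D"
      using excess_le[of q] by (simp add: G_def algebra_simps)
    also have "\<dots> \<le> \<delta> * \<tau> ?D / \<tau> \<delta> * G + 2 * \<tau> ?D"
      using D \<open>0 \<le> G\<close> mult_tau'_le_two_tau[of ?D] by (intro add_mono mult_right_mono) auto
    also have "\<dots> = (G * \<delta> / \<tau> \<delta> + 2) * \<tau> ?D" by (simp add: field_simps)
    finally show ?thesis .
  qed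
  moreover have "0 < G * \<delta> / \<tau> \<delta> + 2"
    using \<open>0 \<le> G\<close> \<open>0 < \<tau> \<delta>\<close> assms by (simp add: add_nonneg_pos)
  ultimately show ?thesis by blast
qed

definition mid_defect :: "'a \<Rightarrow> real" where
  "mid_defect x = F m + F x - 2 * F (hadamard_mid m x)"

lemma mid_defect_eq_integral:
  "mid_defect x = (\<integral>\<omega>. \<tau> (dist (Y \<omega>) m) + \<tau> (dist (Y \<omega>) x)
                      - 2 * \<tau> (dist (Y \<omega>) (hadamard_mid m x)) \<partial>M)"
proof -
  have "(\<integral>\<omega>. (\<tau> (dist (Y \<omega>) x) - \<tau> (dist (Y \<omega>) m))
              - 2 * (\<tau> (dist (Y \<omega>) (hadamard_mid m x)) - \<tau> (dist (Y \<omega>) m)) \<partial>M)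
      = (F x - F m) - 2 * (F (hadamard_mid m x) - F m)"
    using integrable_tau_dist_Y_diff
    by (simp only: Bochner_Integration.integral_diff integrable_mult_right integral_mult_right_zero
        integral_tau_dist_Y_diff)
  then show ?thesis unfolding mid_defect_def by (simp add: algebra_simps)
qed

lemma integrable_tau_mid_defect:
  "integrable M (\<lambda>\<omega>. \<tau> (dist (Y \<omega>) m) + \<tau> (dist (Y \<omega>) x)
                      - 2 * \<tau> (dist (Y \<omega>) (hadamard_mid m x)))"
proof -
  have "integrable M (\<lambda>\<omega>. (\<tau> (dist (Y \<omega>) x) - \<tau> (dist (Y \<omega>) m))
              - 2 * (\<tau> (dist (Y \<omega>) (hadamard_mid m x)) - \<tau> (dist (Y \<omega>) m)))"
    by (rule Bochner_Integration.integrable_diff[OF integrable_tau_dist_Y_diff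
          integrable_mult_right[OF integrable_tau_dist_Y_diff]])
  then show ?thesis by (simp add: algebra_simps)
qed

lemma tau_mid_defect_nonneg:
  "0 \<le> \<tau> (dist y m) + \<tau> (dist y x) - 2 * \<tau> (dist y (hadamard_mid m x))"
proof -
  have "\<tau> (dist y (hadamard_mid m x)) \<le> \<tau> ((dist y m + dist y x) / 2)"
    using dist_hadamard_mid_le[OF hadamard, of y m x] by (intro tau_mono) (auto simp: dist_commute)
  with tau_midpoint_convex[of "dist y m" "dist y x"] show ?thesis by simp
qed

lemma mid_defect_nonneg: "0 \<le> mid_defect x"
  unfolding mid_defect_eq_integral by (intro Bochner_Integration.integral_nonneg tau_mid_defect_nonneg)

lemma mid_defect_ge_prob:
  assumes "0 \<le> L"
    and "\<And>\<omega>. dist (Y \<omega>) m \<le> R \<Longrightarrow>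
           L \<le> \<tau> (dist (Y \<omega>) m) + \<tau> (dist (Y \<omega>) x) - 2 * \<tau> (dist (Y \<omega>) (hadamard_mid m x))"
  shows "L * prob {\<omega> \<in> space M. dist (Y \<omega>) m \<le> R} \<le> mid_defect x"
proof -
  let ?S = "{\<omega> \<in> space M. dist (Y \<omega>) m \<le> R}"
  have S: "?S \<in> sets M" by measurable
  have "L * prob ?S = (\<integral>\<omega>. L * indicator ?S \<omega> \<partial>M)" by simp
  also have "\<dots> \<le> (\<integral>\<omega>. \<tau> (dist (Y \<omega>) m) + \<tau> (dist (Y \<omega>) x)
                         - 2 * \<tau> (dist (Y \<omega>) (hadamard_mid m x)) \<partial>M)"
  proof (rule integral_mono)
    show "integrable M (\<lambda>\<omega>. L * indicator ?S \<omega>)"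
      using S emeasure_finite[of ?S] by (intro integrable_mult_right integrable_real_indicator) (auto simp: less_top[symmetric])
    show "integrable M (\<lambda>\<omega>. \<tau> (dist (Y \<omega>) m) + \<tau> (dist (Y \<omega>) x)
                             - 2 * \<tau> (dist (Y \<omega>) (hadamard_mid m x)))"
      by (rule integrable_tau_mid_defect)
    show "L * indicator ?S \<omega> \<le> \<tau> (dist (Y \<omega>) m) + \<tau> (dist (Y \<omega>) x)
                               - 2 * \<tau> (dist (Y \<omega>) (hadamard_mid m x))" for \<omega>
      using assms tau_mid_defect_nonneg by (auto simp: indicator_def)
  qed
  also have "\<dots> = mid_defect x" by (rule mid_defect_eq_integral[symmetric])
  finally show ?thesis .
qed

lemma excess_ge_rho_sq:
  assumes "0 < Z" "0 \<le> R" "R + dist q m \<le> Z"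
  shows "\<rho> Z * (dist q m)\<^sup>2 / 4 * prob {\<omega> \<in> space M. dist (Y \<omega>) m \<le> R} \<le> F q - F m"
proof -
  have "\<rho> Z * (dist q m)\<^sup>2 / 4 * prob {\<omega> \<in> space M. dist (Y \<omega>) m \<le> R} \<le> mid_defect q"
  proof (rule mid_defect_ge_prob)
    show "0 \<le> \<rho> Z * (dist q m)\<^sup>2 / 4" using rho_nonneg[OF assms(1)] by simp
    fix \<omega> assume a: "dist (Y \<omega>) m \<le> R"
    have "dist (Y \<omega>) q \<le> dist (Y \<omega>) m + dist q m" by (metis dist_commute dist_triangle)
    with a assms zero_le_dist[of q m] have "dist (Y \<omega>) m \<le> Z" "dist (Y \<omega>) q \<le> Z" by linarith+
    then show "\<rho> Z * (dist q m)\<^sup>2 / 4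
        \<le> \<tau> (dist (Y \<omega>) m) + \<tau> (dist (Y \<omega>) q) - 2 * \<tau> (dist (Y \<omega>) (hadamard_mid m q))"
      using dist_hadamard_mid_le[OF hadamard, of "Y \<omega>" m q]
        dist_hadamard_mid_sq_le[OF hadamard, of "Y \<omega>" m q] assms
      by (intro rho_sq_le_three_point_defect)
        (auto simp: dist_commute add_divide_distrib)
  qed
  moreover have "F m \<le> F (hadamard_mid m q)" by (rule F_min)
  ultimately show ?thesis by (simp add: mid_defect_def)
qed

lemma excess_ge_quadratic_near:
  assumes "0 \<le> R" "ereal R < Inf (ereal ` {x. 0 < x \<and> \<rho> x = 0})"
    and "0 < prob {\<omega> \<in> space M. dist (Y \<omega>) m \<le> R}"
  shows "\<exists>\<delta> c. 0 < \<delta> \<and> 0 < c \<and> (\<forall>q. dist q m < \<delta> \<longrightarrow> c * dist q m powr 2 \<le> F q - F m)"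
proof -
  obtain Z where Z: "R < Z" "ereal Z < Inf (ereal ` {x. 0 < x \<and> \<rho> x = 0})"
    using ereal_dense2[OF assms(2)] by auto
  with assms have "0 < \<rho> Z" by (intro rho_pos_below_x0) auto
  show ?thesis
  proof (intro exI conjI allI impI)
    show "0 < Z - R" "0 < \<rho> Z * prob {\<omega> \<in> space M. dist (Y \<omega>) m \<le> R} / 4"
      using Z \<open>0 < \<rho> Z\<close> assms by auto
    fix q assume "dist q m < Z - R"
    then have "\<rho> Z * (dist q m)\<^sup>2 / 4 * prob {\<omega> \<in> space M. dist (Y \<omega>) m \<le> R} \<le> F q - F m"
      using Z assms by (intro excess_ge_rho_sq) auto
    then show "\<rho> Z * prob {\<omega> \<in> space M. dist (Y \<omega>) m \<le> R} / 4 * dist q m powr 2 \<le> F q - F m"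
      by (simp add: field_simps)
  qed
qed

lemma excess_ge_near_liminf:
  assumes "0 < Liminf (at_right 0)
             (\<lambda>x. ereal (\<rho> (2 * x) * prob {\<omega> \<in> space M. dist (Y \<omega>) m \<le> x} / x powr (- \<beta>)))"
  shows "\<exists>\<delta> c. 0 < \<delta> \<and> 0 < c \<and> (\<forall>q. dist q m < \<delta> \<longrightarrow> c * dist q m powr (2 - \<beta>) \<le> F q - F m)"
proof -
  obtain \<epsilon> where "0 < ereal \<epsilon>" and \<epsilon>: "ereal \<epsilon> < Liminf (at_right 0)
      (\<lambda>x. ereal (\<rho> (2 * x) * prob {\<omega> \<in> space M. dist (Y \<omega>) m \<le> x} / x powr (- \<beta>)))"
    using ereal_dense2[OF assms] by blast
  then have "0 < \<epsilon>" by simp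
  from less_LiminfD[OF \<epsilon>] obtain \<eta> where "0 < \<eta>" and \<eta>: "\<And>x. 0 < x \<Longrightarrow> x < \<eta> \<Longrightarrow>
      \<epsilon> < \<rho> (2 * x) * prob {\<omega> \<in> space M. dist (Y \<omega>) m \<le> x} / x powr (- \<beta>)"
    unfolding eventually_at_right_field by auto
  show ?thesis
  proof (intro exI conjI allI impI)
    show "0 < \<eta>" "0 < \<epsilon> / 4" by fact (use \<open>0 < \<epsilon>\<close> in simp)
    fix q assume q: "dist q m < \<eta>"
    show "\<epsilon> / 4 * dist q m powr (2 - \<beta>) \<le> F q - F m"
    proof (cases "q = m")
      case False
      define D where "D = dist q m"
      let ?P = "prob {\<omega> \<in> space M. dist (Y \<omega>) m \<le> D}"
      have D: "0 < D" using False by (simp add: D_def)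
      with \<eta>[of D] q have "\<epsilon> * D powr (- \<beta>) \<le> \<rho> (2 * D) * ?P"
        by (simp add: D_def field_simps)
      then have "\<epsilon> / 4 * D powr (2 - \<beta>) \<le> \<rho> (2 * D) * D\<^sup>2 / 4 * ?P"
        using D by (simp add: powr_diff powr_minus field_simps power2_eq_square)
      also have "\<dots> \<le> F q - F m"
        unfolding D_def using D by (intro excess_ge_rho_sq) (auto simp: D_def)
      finally show ?thesis by (simp add: D_def)
    qed (simp add: F_min)
  qed
qed

lemma excess_ge_near:
  assumes x0: "x0 = Inf (ereal ` {x. 0 < x \<and> \<rho> x = 0})"
    and R: "0 \<le> R" "ereal R < x0" "0 < prob {\<omega> \<in> space M. dist (Y \<omega>) m \<le> R}"
    and \<beta>: "\<beta> = 0 \<or> (0 \<le> \<beta> \<and> \<beta> < 1 \<and> 0 < Liminf (at_right 0)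
             (\<lambda>x. ereal (\<rho> (2 * x) * prob {\<omega> \<in> space M. dist (Y \<omega>) m \<le> x} / x powr (- \<beta>))))"
  shows "\<exists>\<delta> c. 0 < \<delta> \<and> 0 < c \<and> (\<forall>q. dist q m < \<delta> \<longrightarrow> c * dist q m powr (2 - \<beta>) \<le> F q - F m)"
proof (cases "\<beta> = 0")
  case True
  with excess_ge_quadratic_near[OF R(1) R(2)[unfolded x0] R(3)] show ?thesis by simp
next
  case False
  with \<beta> show ?thesis by (intro excess_ge_near_liminf) simp
qed

lemma mid_defect_ge:
  assumes "0 \<le> R"
  shows "prob {\<omega> \<in> space M. dist (Y \<omega>) m \<le> R}
      * (\<tau> (dist m x) - 2 * \<tau> (dist m x / 2) - R * (3 * \<tau>' (dist m x) + 2 * \<tau>' R))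
    \<le> mid_defect x"
proof (cases "0 \<le> \<tau> (dist m x) - 2 * \<tau> (dist m x / 2) - R * (3 * \<tau>' (dist m x) + 2 * \<tau>' R)")
  case True
  then show ?thesis
  proof (subst mult.commute, rule mid_defect_ge_prob)
    fix \<omega> assume a: "dist (Y \<omega>) m \<le> R"
    have "dist m x \<le> dist (Y \<omega>) m + dist (Y \<omega>) x" by (metis dist_commute dist_triangle)
    moreover have "dist (Y \<omega>) (hadamard_mid m x) \<le> dist (Y \<omega>) m + dist m x / 2"
      using dist_triangle[of "Y \<omega>" "hadamard_mid m x" m] dist_hadamard_mid(1)[OF hadamard, of m x]
      by simp
    ultimately show "\<tau> (dist m x) - 2 * \<tau> (dist m x / 2) - R * (3 * \<tau>' (dist m x) + 2 * \<tau>' R)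
        \<le> \<tau> (dist (Y \<omega>) m) + \<tau> (dist (Y \<omega>) x) - 2 * \<tau> (dist (Y \<omega>) (hadamard_mid m x))"
      using a by (intro tau_three_point_defect_ge) auto
  qed
next
  case False
  then show ?thesis
    using mid_defect_nonneg[of x] by (smt (verit) measure_nonneg mult_nonneg_nonpos)
qed

lemma excess_dyadic_telescope:
  "F q - F m = 2 ^ k * (F ((hadamard_mid m ^^ k) q) - F m)
     + (\<Sum>j<k. 2 ^ j * mid_defect ((hadamard_mid m ^^ j) q))"
  by (induction k) (simp_all add: mid_defect_def algebra_simps)

lemma excess_ge_linear_far:
  assumes "0 < \<delta>" "0 < c" "\<beta> \<le> 2"
    and near: "\<And>q. dist q m < \<delta> \<Longrightarrow> c * dist q m powr (2 - \<beta>) \<le> F q - F m"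
    and q: "\<delta> \<le> dist q m"
  shows "c * (\<delta> / 2) powr (2 - \<beta>) / \<delta> * dist q m \<le> F q - F m"
proof -
  obtain k where k: "\<delta> / 2 \<le> dist q m / 2 ^ k" "dist q m / 2 ^ k < \<delta>"
    using dyadic_scale[OF assms(1) q] .
  let ?q = "(hadamard_mid m ^^ k) q"
  have "c * (\<delta> / 2) powr (2 - \<beta>) \<le> c * (dist q m / 2 ^ k) powr (2 - \<beta>)"
    using assms(2,3) k less_imp_le[OF assms(1)] by (intro mult_left_mono powr_mono2) simp_all
  also have "\<dots> \<le> F ?q - F m"
    using near[of ?q] k dist_funpow_hadamard_mid[OF hadamard, of m k q] by (simp add: dist_commute)
  finally have "2 ^ k * (c * (\<delta> / 2) powr (2 - \<beta>)) \<le> 2 ^ k * (F ?q - F m)" by simp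
  moreover have "dist q m / \<delta> * (c * (\<delta> / 2) powr (2 - \<beta>)) \<le> 2 ^ k * (c * (\<delta> / 2) powr (2 - \<beta>))"
    using k assms by (intro mult_right_mono) (auto simp: field_simps)
  moreover have "2 ^ k * (F ?q - F m) \<le> F q - F m"
    using excess_dyadic_telescope[of q k] mid_defect_nonneg by (simp add: sum_nonneg)
  ultimately show ?thesis by (simp add: field_simps)
qed

lemma excess_ge_tau_minus_linear_far:
  assumes "0 < \<delta>" "0 \<le> R"
  shows "\<exists>C\<ge>0. \<forall>q. \<delta> \<le> dist q m \<longrightarrow>
    prob {\<omega> \<in> space M. dist (Y \<omega>) m \<le> R} * (\<tau> (dist q m) / 2 - dist q m * C) \<le> F q - F m"
proof -
  let ?p = "prob {\<omega> \<in> space M. dist (Y \<omega>) m \<le> R}"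
  obtain L :: nat where L: "24 * R < 2 ^ L * \<delta>"
    using real_arch_pow[of 2 "24 * R / \<delta>"] assms by (auto simp: field_simps)
  define C where "C = 2 / \<delta> * (\<tau> \<delta> + 3 * R * \<tau>' (2 ^ L * \<delta>) + 2 * R * \<tau>' R)"
  have "0 \<le> C" using assms tau_nonneg[of \<delta>] tau'_nonneg[of R] tau'_nonneg[of "2 ^ L * \<delta>"]
    by (simp add: C_def)
  moreover have "?p * (\<tau> (dist q m) / 2 - dist q m * C) \<le> F q - F m" if q: "\<delta> \<le> dist q m" for q
  proof -
    define D where "D = dist q m"
    obtain k where k: "\<delta> / 2 \<le> D / 2 ^ k" "D / 2 ^ k < \<delta>"
      using dyadic_scale[OF assms(1) q] unfolding D_def .
    let ?q = "\<lambda>j. (hadamard_mid m ^^ j) q"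
    have "?p * (\<tau> D / 2 - D * C) \<le> ?p * (\<Sum>j<k. 2 ^ j * (\<tau> (D / 2 ^ j) - 2 * \<tau> (D / 2 ^ Suc j)
                                                - R * (3 * \<tau>' (D / 2 ^ j) + 2 * \<tau>' R)))"
      unfolding C_def
      using assms(2) L k q \<open>0 < \<delta>\<close> order.strict_trans2[OF assms(1) q]
      by (intro mult_left_mono dyadic_defect_sum_ge) (simp_all add: D_def field_simps)
    also have "\<dots> \<le> (\<Sum>j<k. 2 ^ j * mid_defect (?q j))"
      unfolding sum_distrib_left
    proof (rule sum_mono)
      fix j
      have "?p * (\<tau> (D / 2 ^ j) - 2 * \<tau> (D / 2 ^ Suc j) - R * (3 * \<tau>' (D / 2 ^ j) + 2 * \<tau>' R))
          \<le> mid_defect (?q j)"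
        using mid_defect_ge[OF assms(2), of "?q j"] dist_funpow_hadamard_mid[OF hadamard, of m j q]
        by (simp add: D_def mult.commute)
      then show "?p * (2 ^ j * (\<tau> (D / 2 ^ j) - 2 * \<tau> (D / 2 ^ Suc j)
                               - R * (3 * \<tau>' (D / 2 ^ j) + 2 * \<tau>' R)))
          \<le> 2 ^ j * mid_defect (?q j)"
        by (simp add: mult.left_commute)
    qed
    also have "\<dots> \<le> F q - F m"
      using excess_dyadic_telescope[of q k] F_min[of "?q k"] by simp
    finally show ?thesis by (simp add: D_def)
  qed
  ultimately show ?thesis by blast
qed

lemma excess_ge_tau_far:
  assumes "0 < \<delta>" "0 < c" "\<beta> \<le> 2"
    and near: "\<And>q. dist q m < \<delta> \<Longrightarrow> c * dist q m powr (2 - \<beta>) \<le> F q - F m"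
    and "0 \<le> R" "0 < prob {\<omega> \<in> space M. dist (Y \<omega>) m \<le> R}"
  shows "\<exists>c'>0. \<forall>q. \<delta> \<le> dist q m \<longrightarrow> c' * \<tau> (dist q m) \<le> F q - F m"
proof -
  define p where "p = prob {\<omega> \<in> space M. dist (Y \<omega>) m \<le> R}"
  define c0 where "c0 = c * (\<delta> / 2) powr (2 - \<beta>) / \<delta>"
  obtain C where "0 \<le> C"
    and C: "\<And>q. \<delta> \<le> dist q m \<Longrightarrow> p * (\<tau> (dist q m) / 2 - dist q m * C) \<le> F q - F m"
    using excess_ge_tau_minus_linear_far[OF assms(1,5)] unfolding p_def by blast
  have "0 < p" "0 < c0" using assms by (simp_all add: p_def c0_def)
  then have den: "0 < 1 + p * C / c0" using \<open>0 \<le> C\<close> by (simp add: add_pos_nonneg)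
  show ?thesis
  proof (intro exI conjI allI impI)
    show "0 < p / 2 / (1 + p * C / c0)" using \<open>0 < p\<close> den by simp
    fix q assume q: "\<delta> \<le> dist q m"
    \<comment> \<open>the linear bound absorbs the linear error term of the bound from \<open>C\<close>\<close>
    have "c0 * dist q m \<le> F q - F m"
      using excess_ge_linear_far[OF assms(1-3) near q] by (simp add: c0_def)
    then have "p * C / c0 * (c0 * dist q m) \<le> p * C / c0 * (F q - F m)"
      using \<open>0 < p\<close> \<open>0 < c0\<close> \<open>0 \<le> C\<close> by (intro mult_left_mono) simp_all
    with C[OF q] \<open>0 < c0\<close> have "p * \<tau> (dist q m) / 2 \<le> (F q - F m) * (1 + p * C / c0)"
      by (simp add: algebra_simps)
    then have "p * \<tau> (dist q m) / 2 / (1 + p * C / c0) \<le> F q - F m"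
      by (simp only: pos_divide_le_eq[OF den])
    then show "p / 2 / (1 + p * C / c0) * \<tau> (dist q m) \<le> F q - F m" by simp
  qed
qed

theorem excess_bounds:
  assumes x0: "x0 = Inf (ereal ` {x. 0 < x \<and> \<rho> x = 0})"
    and mass: "0 < prob {\<omega> \<in> space M. ereal (dist (Y \<omega>) m) < x0}"
    and \<beta>: "\<beta> = 0 \<or> (0 \<le> \<beta> \<and> \<beta> < 1 \<and> 0 < Liminf (at_right 0)
             (\<lambda>x. ereal (\<rho> (2 * x) * prob {\<omega> \<in> space M. dist (Y \<omega>) m \<le> x} / x powr (- \<beta>))))"
  shows "\<exists>c1 c2 c3 c4 \<delta>. 0 < c1 \<and> 0 < c2 \<and> 0 < c3 \<and> 0 < c4 \<and> 0 < \<delta> \<and>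
     (\<forall>q. dist q m < \<delta> \<longrightarrow> F q - F m \<le> c1 * dist q m \<and> c2 * dist q m powr (2 - \<beta>) \<le> F q - F m) \<and>
     (\<forall>q. \<delta> \<le> dist q m \<longrightarrow> F q - F m \<le> c3 * \<tau> (dist q m) \<and> c4 * \<tau> (dist q m) \<le> F q - F m)"
proof -
  obtain R where R: "ereal R < x0" "0 < prob {\<omega> \<in> space M. dist (Y \<omega>) m \<le> R}"
    using prob_sublevel_pos_below[OF measurable_dist_Y mass] by blast
  have "0 \<le> R"
  proof (rule ccontr)
    assume "\<not> 0 \<le> R"
    then have "{\<omega> \<in> space M. dist (Y \<omega>) m \<le> R} = {}"
      by (auto intro: order.trans[OF zero_le_dist])
    with R(2) show False by simp
  qed
  obtain \<delta> c2 where "0 < \<delta>" "0 < c2"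
    and lower_near: "\<And>q. dist q m < \<delta> \<Longrightarrow> c2 * dist q m powr (2 - \<beta>) \<le> F q - F m"
    using excess_ge_near[OF x0 \<open>0 \<le> R\<close> R \<beta>] by blast
  have "\<beta> \<le> 2" using \<beta> by auto
  obtain c4 where "0 < c4"
    and lower_far: "\<And>q. \<delta> \<le> dist q m \<Longrightarrow> c4 * \<tau> (dist q m) \<le> F q - F m"
    using excess_ge_tau_far[OF \<open>0 < \<delta>\<close> \<open>0 < c2\<close> \<open>\<beta> \<le> 2\<close> lower_near \<open>0 \<le> R\<close> R(2)] by blast
  obtain c1 where "0 < c1" and upper_near: "\<And>q. dist q m < \<delta> \<Longrightarrow> F q - F m \<le> c1 * dist q m"
    using excess_le_linear_near[OF \<open>0 < \<delta>\<close>] by blast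
  obtain c3 where "0 < c3" and upper_far: "\<And>q. \<delta> \<le> dist q m \<Longrightarrow> F q - F m \<le> c3 * \<tau> (dist q m)"
    using excess_le_tau_far[OF \<open>0 < \<delta>\<close>] by blast
  show ?thesis
    using \<open>0 < c1\<close> \<open>0 < c2\<close> \<open>0 < c3\<close> \<open>0 < c4\<close> \<open>0 < \<delta>\<close>
      lower_near lower_far upper_near upper_far
    by (intro exI[of _ c1] exI[of _ c2] exI[of _ c3] exI[of _ c4] exI[of _ \<delta>]) simp
qed

end

theorem mainTheorem8:
  fixes M :: "'w measure" and Y :: "'w \<Rightarrow> 'a::{metric_space, complete_space}"
    and ob m :: 'a and \<tau> :: "real \<Rightarrow> real" and \<beta> :: real and x0 :: ereal
  assumes "prob_space M"
    and "hadamard TYPE('a)"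
    and "Y \<in> measurable M borel"
    and "\<tau> \<in> S0plus"
    and "integrable M (\<lambda>\<omega>. tau' \<tau> (dist (Y \<omega>) ob))"
    and "\<forall>q. (\<integral>\<omega>. \<tau> (dist (Y \<omega>) m) - \<tau> (dist (Y \<omega>) ob) \<partial>M)
             \<le> (\<integral>\<omega>. \<tau> (dist (Y \<omega>) q) - \<tau> (dist (Y \<omega>) ob) \<partial>M)"
    and "x0 = Inf (ereal ` {x. x > 0 \<and> rderiv (tau' \<tau>) x = 0})"
    and "measure M {\<omega> \<in> space M. ereal (dist (Y \<omega>) m) < x0} > 0"
    and "\<beta> = 0 \<or> (0 \<le> \<beta> \<and> \<beta> < 1 \<and>
           Liminf (at_right 0) (\<lambda>x. ereal (rderiv (tau' \<tau>) (2 * x)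
               * measure M {\<omega> \<in> space M. dist (Y \<omega>) m \<le> x} / x powr (- \<beta>))) > 0)"
  shows "\<exists>c1 c2 c3 c4 \<delta>. c1 > 0 \<and> c2 > 0 \<and> c3 > 0 \<and> c4 > 0 \<and> \<delta> > 0 \<and>
     (\<forall>q. dist q m < \<delta> \<longrightarrow>
        c1 * dist q m \<ge> (\<integral>\<omega>. \<tau> (dist (Y \<omega>) q) - \<tau> (dist (Y \<omega>) m) \<partial>M) \<and>
        (\<integral>\<omega>. \<tau> (dist (Y \<omega>) q) - \<tau> (dist (Y \<omega>) m) \<partial>M) \<ge> c2 * dist q m powr (2 - \<beta>)) \<and>
     (\<forall>q. dist q m \<ge> \<delta> \<longrightarrow>
        c3 * \<tau> (dist q m) \<ge> (\<integral>\<omega>. \<tau> (dist (Y \<omega>) q) - \<tau> (dist (Y \<omega>) m) \<partial>M) \<and>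
        (\<integral>\<omega>. \<tau> (dist (Y \<omega>) q) - \<tau> (dist (Y \<omega>) m) \<partial>M) \<ge> c4 * \<tau> (dist q m))"
proof -
  interpret frechet_excess \<tau> M Y ob m
    by (intro frechet_excess.intro S0plus_fun.intro frechet_excess_axioms.intro)
      (use assms in auto)
  show ?thesis
    using excess_bounds[OF assms(7-9)] by (simp add: integral_tau_dist_Y_diff)
qed

end
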